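(* Let $\lambda\in(0,1)$ and let $n$ be a positive integer. If $G$ is a graph that maximizes $Mc^{e}_{\lambda}(G)$ among all finite simple connected graphs with $n$ vertices, then $G$ is a tree.
   Context: $d(u,v)$ denotes graph distance and $[u]$ the set of neighbours of $u$. For vertices $k,l$, $s^{kl}$ is the number of shortest $k$–$l$ paths and, for an edge $uv$, $s^{kl}_{uv}$ is the number of those passing through the edge $uv$. The exponential edge betweenness of an edge $uv$ is $b^{e}_{\lambda}(uv)=\sum_{\{k,l\}}\frac{s^{kl}_{uv}}{s^{kl}}\lambda^{d(k,l)}$ over all unordered pairs $\{k,l\}$ of distinct vertices; the exponential betweenness centrality of a vertex $u$ is $c^{e}_{\lambda}(u)=\sum_{v\in[u]}b^{e}_{\lambda}(uv)$; and $Mc^{e}_{\lambda}(G)=\max\{c^{e}_{\lambda}(u):u\in V(G)\}$. *)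

theory Defs
  imports Complex_Main
begin

definition simple_graph :: "'a set \<Rightarrow> ('a \<Rightarrow> 'a \<Rightarrow> bool) \<Rightarrow> bool" where
  "simple_graph V E \<longleftrightarrow> finite V \<and> (\<forall>u v. E u v \<longrightarrow> u \<in> V \<and> v \<in> V)
     \<and> (\<forall>u v. E u v \<longrightarrow> E v u) \<and> (\<forall>u. \<not> E u u)"

text \<open>A walk is a nonempty vertex list with consecutive vertices adjacent;
  its length (number of edges) is length p - 1.\<close>

definition walk :: "'a set \<Rightarrow> ('a \<Rightarrow> 'a \<Rightarrow> bool) \<Rightarrow> 'a list \<Rightarrow> bool" where
  "walk V E p \<longleftrightarrow> p \<noteq> [] \<and> set p \<subseteq> V \<and>
     (\<forall>i. Suc i < length p \<longrightarrow> E (p ! i) (p ! Suc i))"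

definition connected_graph :: "'a set \<Rightarrow> ('a \<Rightarrow> 'a \<Rightarrow> bool) \<Rightarrow> bool" where
  "connected_graph V E \<longleftrightarrow>
     (\<forall>k\<in>V. \<forall>l\<in>V. \<exists>p. walk V E p \<and> hd p = k \<and> last p = l)"

definition gdist :: "'a set \<Rightarrow> ('a \<Rightarrow> 'a \<Rightarrow> bool) \<Rightarrow> 'a \<Rightarrow> 'a \<Rightarrow> nat" where
  "gdist V E k l = (LEAST m. \<exists>p. walk V E p \<and> hd p = k \<and> last p = l \<and> length p = Suc m)"

definition shortest_paths :: "'a set \<Rightarrow> ('a \<Rightarrow> 'a \<Rightarrow> bool) \<Rightarrow> 'a \<Rightarrow> 'a \<Rightarrow> 'a list set" where
  "shortest_paths V E k l =
     {p. walk V E p \<and> hd p = k \<and> last p = l \<and> length p = Suc (gdist V E k l)}"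

definition uses_edge :: "'a list \<Rightarrow> 'a \<Rightarrow> 'a \<Rightarrow> bool" where
  "uses_edge p u v \<longleftrightarrow> (\<exists>i. Suc i < length p \<and> {p ! i, p ! Suc i} = {u, v})"

definition num_sp :: "'a set \<Rightarrow> ('a \<Rightarrow> 'a \<Rightarrow> bool) \<Rightarrow> 'a \<Rightarrow> 'a \<Rightarrow> nat" where
  "num_sp V E k l = card (shortest_paths V E k l)"

definition num_sp_edge :: "'a set \<Rightarrow> ('a \<Rightarrow> 'a \<Rightarrow> bool) \<Rightarrow> 'a \<Rightarrow> 'a \<Rightarrow> 'a \<Rightarrow> 'a \<Rightarrow> nat" where
  "num_sp_edge V E k l u v = card {p \<in> shortest_paths V E k l. uses_edge p u v}"

text \<open>Exponential edge betweenness. The sum over unordered pairs {k,l} of distinct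
  vertices is written as half the sum over ordered pairs (the summand is symmetric in k,l).\<close>
definition exp_edge_betweenness ::
  "real \<Rightarrow> 'a set \<Rightarrow> ('a \<Rightarrow> 'a \<Rightarrow> bool) \<Rightarrow> 'a \<Rightarrow> 'a \<Rightarrow> real" where
  "exp_edge_betweenness lam V E u v =
     (1/2) * (\<Sum>(k,l) \<in> {(k,l). k \<in> V \<and> l \<in> V \<and> k \<noteq> l}.
        real (num_sp_edge V E k l u v) / real (num_sp V E k l) * lam ^ gdist V E k l)"

definition exp_betweenness_centrality ::
  "real \<Rightarrow> 'a set \<Rightarrow> ('a \<Rightarrow> 'a \<Rightarrow> bool) \<Rightarrow> 'a \<Rightarrow> real" where
  "exp_betweenness_centrality lam V E u =
     (\<Sum>v \<in> {v \<in> V. E u v}. exp_edge_betweenness lam V E u v)"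

definition max_exp_betweenness :: "real \<Rightarrow> 'a set \<Rightarrow> ('a \<Rightarrow> 'a \<Rightarrow> bool) \<Rightarrow> real" where
  "max_exp_betweenness lam V E = Max (exp_betweenness_centrality lam V E ` V)"

definition is_cycle :: "'a set \<Rightarrow> ('a \<Rightarrow> 'a \<Rightarrow> bool) \<Rightarrow> 'a list \<Rightarrow> bool" where
  "is_cycle V E p \<longleftrightarrow> walk V E p \<and> distinct p \<and> length p \<ge> 3 \<and> E (last p) (hd p)"

definition is_tree :: "'a set \<Rightarrow> ('a \<Rightarrow> 'a \<Rightarrow> bool) \<Rightarrow> bool" where
  "is_tree V E \<longleftrightarrow> connected_graph V E \<and> (\<nexists>p. is_cycle V E p)"

end

theory Submission imports Defs begin

text \<open>Let G contain a cycle and let u be a vertex of maximal centrality, and split the centrality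
  of u into the contributions of the vertex pairs {k,l}. A shortest path uses at most two edges at
  u, and at most one if u is an end vertex; so a pair containing u contributes at most \<lambda>, a
  non-adjacent such pair at most \<lambda>^2, an edge avoiding u nothing, and any other pair at most
  2\<lambda>^2. In the star centred at u the pairs containing u contribute exactly \<lambda> and all others
  exactly 2\<lambda>^2, and as G is not this star some pair does strictly better there. So the star has
  a larger maximal centrality than G.\<close>

lemma walk_shortcut:
  assumes w: "walk V E p" and ij: "i < j" "j < length p" and eq: "p ! i = p ! j"
  shows "walk V E (take i p @ drop j p)"
proof -
  let ?q = "take i p @ drop j p"
  have lq: "length ?q = i + (length p - j)" using ij by simp
  have "set ?q \<subseteq> V"
    using w set_take_subset[of i p] set_drop_subset[of j p] unfolding walk_def by auto
  moreover have "E (?q ! m) (?q ! Suc m)" if m: "Suc m < length ?q" for m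
  proof -
    consider "Suc m < i" | "Suc m = i" | "i \<le> m" by linarith
    then show ?thesis
    proof cases
      case 1
      then show ?thesis using w ij unfolding walk_def by (simp add: nth_append)
    next
      case 2
      then have "?q ! m = p ! m" "?q ! Suc m = p ! j" using ij by (auto simp: nth_append)
      moreover have "E (p ! m) (p ! Suc m)" using w 2 ij unfolding walk_def by auto
      ultimately show ?thesis using 2 eq by simp
    next
      case 3
      then have "?q ! m = p ! (j + (m - i))" "?q ! Suc m = p ! Suc (j + (m - i))"
        using ij m by (auto simp: nth_append Suc_diff_le)
      moreover have "Suc (j + (m - i)) < length p" using m lq 3 by linarith
      ultimately show ?thesis using w unfolding walk_def by auto
    qed
  qed
  ultimately show ?thesis using ij unfolding walk_def by auto
qed

lemma gdist_le_length:
  assumes "walk V E p" "hd p = k" "last p = l"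
  shows "gdist V E k l \<le> length p - 1"
  unfolding gdist_def
proof (rule Least_le)
  have "length p = Suc (length p - 1)" using assms(1) unfolding walk_def by simp
  then show "\<exists>q. walk V E q \<and> hd q = k \<and> last q = l \<and> length q = Suc (length p - 1)"
    using assms by blast
qed

lemma shortest_paths_nonempty:
  assumes "walk V E p" "hd p = k" "last p = l"
  shows "shortest_paths V E k l \<noteq> {}"
proof -
  have "length p = Suc (length p - 1)" using assms(1) unfolding walk_def by simp
  then have "\<exists>m q. walk V E q \<and> hd q = k \<and> last q = l \<and> length q = Suc m"
    using assms by blast
  then have "\<exists>q. walk V E q \<and> hd q = k \<and> last q = l \<and> length q = Suc (gdist V E k l)"
    unfolding gdist_def by (rule LeastI_ex)
  then show ?thesis unfolding shortest_paths_def by blast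
qed

lemma finite_shortest_paths:
  assumes "finite V"
  shows "finite (shortest_paths V E k l)"
proof (rule finite_subset)
  show "shortest_paths V E k l \<subseteq> {xs. set xs \<subseteq> V \<and> length xs = Suc (gdist V E k l)}"
    unfolding shortest_paths_def walk_def by auto
qed (rule finite_lists_length_eq[OF assms])

lemma shortest_paths_distinct:
  assumes p: "p \<in> shortest_paths V E k l"
  shows "distinct p"
proof (rule ccontr)
  assume "\<not> distinct p"
  then obtain i j where ij: "i < j" "j < length p" "p ! i = p ! j"
    unfolding distinct_conv_nth by (metis linorder_neqE_nat)
  from p have w: "walk V E p" and "hd p = k" "last p = l"
    and len: "length p = Suc (gdist V E k l)"
    unfolding shortest_paths_def by auto
  let ?q = "take i p @ drop j p"
  have "hd ?q = k"
  proof (cases "i = 0")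
    case True
    then show ?thesis using ij \<open>hd p = k\<close> w by (simp add: hd_drop_conv_nth hd_conv_nth walk_def)
  next
    case False
    moreover have "p \<noteq> []" using ij by auto
    ultimately show ?thesis using ij \<open>hd p = k\<close> by (simp add: hd_append hd_take)
  qed
  moreover have "last ?q = l" using ij \<open>last p = l\<close> by simp
  ultimately have "gdist V E k l \<le> length ?q - 1"
    using gdist_le_length[OF walk_shortcut[OF w ij]] by blast
  then show False using len ij by simp
qed

lemma gdist_ge_1:
  assumes "walk V E p" "hd p = k" "last p = l" "k \<noteq> l"
  shows "1 \<le> gdist V E k l"
proof (rule ccontr)
  obtain q where "q \<in> shortest_paths V E k l" using shortest_paths_nonempty[OF assms(1-3)] by blast
  then have q: "hd q = k" "last q = l" "length q = Suc (gdist V E k l)"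
    unfolding shortest_paths_def by auto
  assume "\<not> 1 \<le> gdist V E k l"
  then have "length q = 1" using q(3) by simp
  then obtain a where "q = [a]" by (metis One_nat_def length_0_conv length_Suc_conv)
  then show False using q assms(4) by simp
qed

lemma gdist_ge_2:
  assumes "walk V E p" "hd p = k" "last p = l" "k \<noteq> l" "\<not> E k l"
  shows "2 \<le> gdist V E k l"
proof (rule ccontr)
  obtain q where "q \<in> shortest_paths V E k l" using shortest_paths_nonempty[OF assms(1-3)] by blast
  then have q: "walk V E q" "hd q = k" "last q = l" "length q = Suc (gdist V E k l)"
    unfolding shortest_paths_def by auto
  assume "\<not> 2 \<le> gdist V E k l"
  with gdist_ge_1[OF assms(1-4)] have "length q = 2" using q(4) by simp
  then obtain a b where "q = [a, b]" by (metis One_nat_def Suc_1 length_0_conv length_Suc_conv)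
  then show False using q assms(5) unfolding walk_def by auto
qed

lemma walk_edge: "simple_graph V E \<Longrightarrow> E k l \<Longrightarrow> walk V E [k, l]"
  unfolding simple_graph_def walk_def by (auto simp: less_Suc_eq)

lemma gdist_edge:
  assumes g: "simple_graph V E" and e: "E k l"
  shows "gdist V E k l = 1"
proof -
  have "k \<noteq> l" using g e unfolding simple_graph_def by auto
  then have "1 \<le> gdist V E k l" by (intro gdist_ge_1[OF walk_edge[OF g e]]) simp_all
  moreover have "gdist V E k l \<le> 1" using gdist_le_length[OF walk_edge[OF g e]] by simp
  ultimately show ?thesis by simp
qed

lemma shortest_paths_edge:
  assumes g: "simple_graph V E" and e: "E k l"
  shows "shortest_paths V E k l = {[k, l]}"
proof
  show "shortest_paths V E k l \<subseteq> {[k, l]}"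
  proof
    fix p assume "p \<in> shortest_paths V E k l"
    then have "hd p = k" "last p = l" "length p = 2"
      unfolding shortest_paths_def using gdist_edge[OF g e] by auto
    then show "p \<in> {[k, l]}" by (cases p; cases "tl p") (auto simp: length_Suc_conv)
  qed
  show "{[k, l]} \<subseteq> shortest_paths V E k l"
    unfolding shortest_paths_def using walk_edge[OF g e] gdist_edge[OF g e] by simp
qed

lemma uses_edge_in_set: "uses_edge p u v \<Longrightarrow> u \<in> set p \<and> v \<in> set p"
  unfolding uses_edge_def by (metis Suc_lessD doubleton_eq_iff nth_mem)

lemma uses_edge_nth:
  assumes d: "distinct p" and i: "i < length p" and "uses_edge p (p ! i) v"
  shows "(0 < i \<and> v = p ! (i - 1)) \<or> (Suc i < length p \<and> v = p ! Suc i)"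
proof -
  obtain j where j: "Suc j < length p" "{p ! j, p ! Suc j} = {p ! i, v}"
    using assms(3) unfolding uses_edge_def by blast
  then consider "p ! j = p ! i" "p ! Suc j = v" | "p ! Suc j = p ! i" "p ! j = v"
    by (metis doubleton_eq_iff)
  then show ?thesis
  proof cases
    case 1
    then have "j = i" using d i j by (simp add: nth_eq_iff_index_eq)
    then show ?thesis using 1 j by auto
  next
    case 2
    then have "Suc j = i" using d i j by (simp add: nth_eq_iff_index_eq)
    then show ?thesis using 2 j by auto
  qed
qed

lemma card_uses_edge_le_2:
  assumes "distinct p"
  shows "card {v. uses_edge p u v} \<le> 2"
proof (cases "u \<in> set p")
  case True
  then obtain i where i: "i < length p" "u = p ! i" by (metis in_set_conv_nth)
  have "card {v. uses_edge p u v} \<le> card {p ! (i - 1), p ! Suc i}"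
    by (rule card_mono) (use uses_edge_nth[OF assms i(1)] i(2) in auto)
  also have "\<dots> \<le> 2" by (simp add: card_insert_if)
  finally show ?thesis .
next
  case False
  then have "{v. uses_edge p u v} = {}" by (auto dest: uses_edge_in_set)
  then show ?thesis by simp
qed

lemma card_uses_edge_end_le_1:
  assumes d: "distinct p" and u: "u = hd p \<or> u = last p"
  shows "card {v. uses_edge p u v} \<le> 1"
proof -
  have "\<exists>x. {v. uses_edge p u v} \<subseteq> {x}"
  proof (cases "p = []")
    case True
    then show ?thesis by (simp add: uses_edge_def)
  next
    case False
    from u show ?thesis
    proof
      assume "u = hd p"
      then have "u = p ! 0" using False by (simp add: hd_conv_nth)
      then have "{v. uses_edge p u v} \<subseteq> {p ! Suc 0}"
        using uses_edge_nth[OF d, of 0] False by auto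
      then show ?thesis by blast
    next
      assume "u = last p"
      then have "u = p ! (length p - 1)" using False by (simp add: last_conv_nth)
      then have "{v. uses_edge p u v} \<subseteq> {p ! (length p - 1 - 1)}"
        using uses_edge_nth[OF d, of "length p - 1"] False by auto
      then show ?thesis by blast
    qed
  qed
  then obtain x where "{v. uses_edge p u v} \<subseteq> {x}" by blast
  then show ?thesis using card_mono[of "{x}"] by simp
qed

definition pair_betweenness ::
  "real \<Rightarrow> 'a set \<Rightarrow> ('a \<Rightarrow> 'a \<Rightarrow> bool) \<Rightarrow> 'a \<Rightarrow> 'a \<Rightarrow> 'a \<Rightarrow> real" where
  "pair_betweenness lam V E u k l =
     real (\<Sum>v\<in>{v \<in> V. E u v}. num_sp_edge V E k l u v) / real (num_sp V E k l) * lam ^ gdist V E k l"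

lemma exp_betweenness_centrality_eq_pair_sum:
  "exp_betweenness_centrality lam V E u =
    1/2 * (\<Sum>(k, l)\<in>{(k, l). k \<in> V \<and> l \<in> V \<and> k \<noteq> l}. pair_betweenness lam V E u k l)"
  unfolding exp_betweenness_centrality_def exp_edge_betweenness_def pair_betweenness_def
  by (simp add: case_prod_beta sum_distrib_left sum_distrib_right sum_divide_distrib
      sum.swap[of _ "{v \<in> V. E u v}"])

lemma card_filter_eq_sum: "finite A \<Longrightarrow> card {x \<in> A. P x} = (\<Sum>x\<in>A. if P x then 1 else 0)"
  unfolding card_eq_sum by (rule sum.inter_filter)

lemma sum_card_filter_swap:
  assumes "finite A" "finite B"
  shows "(\<Sum>a\<in>A. card {b \<in> B. P a b}) = (\<Sum>b\<in>B. card {a \<in> A. P a b})"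
proof -
  have "(\<Sum>a\<in>A. card {b \<in> B. P a b}) = (\<Sum>a\<in>A. \<Sum>b\<in>B. if P a b then 1 else 0)"
    using card_filter_eq_sum[OF assms(2)] by (simp only:)
  also have "\<dots> = (\<Sum>b\<in>B. \<Sum>a\<in>A. if P a b then 1 else 0)" by (rule sum.swap)
  also have "\<dots> = (\<Sum>b\<in>B. card {a \<in> A. P a b})"
    using card_filter_eq_sum[OF assms(1)] by (simp only:)
  finally show ?thesis .
qed

lemma pair_betweenness_le:
  assumes fin: "finite V" and lam: "0 \<le> lam"
    and c: "\<And>p. p \<in> shortest_paths V E k l \<Longrightarrow> card {v. uses_edge p u v} \<le> c"
  shows "pair_betweenness lam V E u k l \<le> c * lam ^ gdist V E k l"
proof -
  let ?S = "shortest_paths V E k l" and ?N = "{v \<in> V. E u v}"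
  have "(\<Sum>v\<in>?N. num_sp_edge V E k l u v) = (\<Sum>p\<in>?S. card {v \<in> ?N. uses_edge p u v})"
    unfolding num_sp_edge_def using fin finite_shortest_paths[OF fin] by (intro sum_card_filter_swap) auto
  also have "\<dots> \<le> (\<Sum>p\<in>?S. c)"
  proof (rule sum_mono)
    fix p assume "p \<in> ?S"
    have "finite {v. uses_edge p u v}"
      by (rule finite_subset[of _ "set p"]) (auto dest: uses_edge_in_set)
    then have "card {v \<in> ?N. uses_edge p u v} \<le> card {v. uses_edge p u v}" by (rule card_mono) auto
    then show "card {v \<in> ?N. uses_edge p u v} \<le> c" using c[OF \<open>p \<in> ?S\<close>] by linarith
  qed
  also have "\<dots> = num_sp V E k l * c" unfolding num_sp_def by simp
  finally have "real (\<Sum>v\<in>?N. num_sp_edge V E k l u v) \<le> real (num_sp V E k l) * real c"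
    by (metis of_nat_le_iff of_nat_mult)
  then have "real (\<Sum>v\<in>?N. num_sp_edge V E k l u v) / real (num_sp V E k l) \<le> c"
    by (cases "num_sp V E k l = 0") (simp_all add: divide_le_eq mult.commute)
  then show ?thesis unfolding pair_betweenness_def using lam by (intro mult_right_mono) simp_all
qed

lemma pair_betweenness_unique_path:
  assumes fin: "finite V" and S: "shortest_paths V E k l = {p}"
  shows "pair_betweenness lam V E u k l
           = real (card {v \<in> V. E u v \<and> uses_edge p u v}) * lam ^ (length p - 1)"
proof -
  have "p \<in> shortest_paths V E k l" using S by simp
  then have d: "gdist V E k l = length p - 1" unfolding shortest_paths_def by simp
  have "num_sp_edge V E k l u v = (if uses_edge p u v then 1 else 0)" for v
  proof -
    have "{q \<in> {p}. uses_edge q u v} = (if uses_edge p u v then {p} else {})" by auto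
    then show ?thesis unfolding num_sp_edge_def S by simp
  qed
  then have "(\<Sum>v\<in>{v \<in> V. E u v}. num_sp_edge V E k l u v)
      = (\<Sum>v\<in>{v \<in> V. E u v}. if uses_edge p u v then 1 else 0)"
    by simp
  also have "\<dots> = card {v \<in> {v \<in> V. E u v}. uses_edge p u v}"
    by (rule card_filter_eq_sum[symmetric]) (use fin in simp)
  also have "\<dots> = card {v \<in> V. E u v \<and> uses_edge p u v}"
    by (rule arg_cong[where f = card]) blast
  finally show ?thesis unfolding pair_betweenness_def num_sp_def S d by simp
qed

definition star_graph :: "'a set \<Rightarrow> 'a \<Rightarrow> 'a \<Rightarrow> 'a \<Rightarrow> bool" where
  "star_graph V u x y \<longleftrightarrow> x \<in> V \<and> y \<in> V \<and> x \<noteq> y \<and> (x = u \<or> y = u)"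

lemma simple_graph_star: "finite V \<Longrightarrow> simple_graph V (star_graph V u)"
  unfolding simple_graph_def star_graph_def by auto

lemma walk_star_via_centre:
  "u \<in> V \<Longrightarrow> k \<in> V \<Longrightarrow> l \<in> V \<Longrightarrow> k \<noteq> u \<Longrightarrow> l \<noteq> u \<Longrightarrow> walk V (star_graph V u) [k, u, l]"
  unfolding walk_def star_graph_def by (auto simp: less_Suc_eq nth_Cons split: nat.splits)

lemma connected_graph_star:
  assumes u: "u \<in> V" and fin: "finite V"
  shows "connected_graph V (star_graph V u)"
  unfolding connected_graph_def
proof (intro ballI)
  fix k l assume k: "k \<in> V" and l: "l \<in> V"
  consider "k = l" | "star_graph V u k l" | "k \<noteq> u" "l \<noteq> u"
    unfolding star_graph_def using k l by blast
  then show "\<exists>p. walk V (star_graph V u) p \<and> hd p = k \<and> last p = l"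
  proof cases
    case 1
    then show ?thesis using k by (intro exI[of _ "[k]"]) (simp add: walk_def)
  next
    case 2
    then show ?thesis using walk_edge[OF simple_graph_star[OF fin]] by force
  next
    case 3
    then show ?thesis using walk_star_via_centre[OF u k l] by force
  qed
qed

lemma pair_betweenness_star_centre:
  assumes fin: "finite V" and k: "k \<in> V" and l: "l \<in> V" "k \<noteq> l" and u: "k = u \<or> l = u"
  shows "pair_betweenness lam V (star_graph V u) u k l = lam"
proof -
  have e: "star_graph V u k l" unfolding star_graph_def using k l u by blast
  define w where "w = (if k = u then l else k)"
  have "{v \<in> V. star_graph V u u v \<and> uses_edge [k, l] u v} = {w}"
    using k l u unfolding w_def star_graph_def uses_edge_def by (auto simp: less_Suc_eq)
  then show ?thesis
    using pair_betweenness_unique_path[OF fin shortest_paths_edge[OF simple_graph_star[OF fin] e],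
        where lam = lam and u = u] by simp
qed

lemma pair_betweenness_star_off_centre:
  assumes fin: "finite V" and u: "u \<in> V" and k: "k \<in> V" and l: "l \<in> V" "k \<noteq> l"
    and ku: "k \<noteq> u" "l \<noteq> u"
  shows "pair_betweenness lam V (star_graph V u) u k l = 2 * lam ^ 2"
proof -
  let ?S = "star_graph V u"
  have w: "walk V ?S [k, u, l]" by (rule walk_star_via_centre[OF u k l(1) ku])
  have "\<not> ?S k l" using ku unfolding star_graph_def by simp
  then have "2 \<le> gdist V ?S k l" by (intro gdist_ge_2[OF w _ _ \<open>k \<noteq> l\<close>]) simp_all
  moreover have "gdist V ?S k l \<le> length [k, u, l] - 1" by (rule gdist_le_length[OF w]) simp_all
  ultimately have d: "gdist V ?S k l = 2" by simp
  have "shortest_paths V ?S k l = {[k, u, l]}"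
  proof
    show "shortest_paths V ?S k l \<subseteq> {[k, u, l]}"
    proof
      fix p assume "p \<in> shortest_paths V ?S k l"
      then have p: "walk V ?S p" "hd p = k" "last p = l" "length p = 3"
        unfolding shortest_paths_def using d by auto
      then obtain b where "p = [k, b, l]" by (auto simp: length_Suc_conv numeral_3_eq_3)
      moreover have "?S (p ! 0) (p ! 1)" using p(1,4) unfolding walk_def by auto
      ultimately show "p \<in> {[k, u, l]}" using ku unfolding star_graph_def by auto
    qed
  qed (use w d in \<open>simp add: shortest_paths_def\<close>)
  moreover have "{v \<in> V. ?S u v \<and> uses_edge [k, u, l] u v} = {k, l}"
  proof -
    have "distinct [k, u, l]" using ku l(2) by simp
    then have "uses_edge [k, u, l] u v \<Longrightarrow> v = k \<or> v = l" for v
      using uses_edge_nth[of "[k, u, l]" 1 v] by simp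
    moreover have "uses_edge [k, u, l] u k" "uses_edge [k, u, l] u l"
      unfolding uses_edge_def by (auto intro: exI[of _ 0] exI[of _ 1])
    ultimately show ?thesis using k l ku u unfolding star_graph_def by auto
  qed
  ultimately show ?thesis using l(2) by (simp add: pair_betweenness_unique_path[OF fin] power2_eq_square)
qed

lemma pair_betweenness_le_centre:
  assumes "finite V" "0 \<le> lam" "k = u \<or> l = u"
  shows "pair_betweenness lam V E u k l \<le> lam ^ gdist V E k l"
proof -
  have "pair_betweenness lam V E u k l \<le> real 1 * lam ^ gdist V E k l"
  proof (rule pair_betweenness_le[OF assms(1,2)])
    fix p assume "p \<in> shortest_paths V E k l"
    then have "distinct p" "u = hd p \<or> u = last p"
      using shortest_paths_distinct[of p] assms(3) unfolding shortest_paths_def by auto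
    then show "card {v. uses_edge p u v} \<le> 1" by (rule card_uses_edge_end_le_1)
  qed
  then show ?thesis by simp
qed

lemma pair_betweenness_edge_avoiding:
  assumes "simple_graph V E" "0 \<le> lam" "E k l" "k \<noteq> u" "l \<noteq> u"
  shows "pair_betweenness lam V E u k l \<le> 0"
proof -
  have "finite V" using assms(1) unfolding simple_graph_def by simp
  have "pair_betweenness lam V E u k l \<le> real 0 * lam ^ gdist V E k l"
  proof (rule pair_betweenness_le[OF \<open>finite V\<close> assms(2)])
    fix p assume "p \<in> shortest_paths V E k l"
    then have "p = [k, l]" using shortest_paths_edge[OF assms(1,3)] by simp
    then have "{v. uses_edge p u v} = {}" using assms(4,5) by (auto dest: uses_edge_in_set)
    then show "card {v. uses_edge p u v} \<le> 0" by simp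
  qed
  then show ?thesis by simp
qed

lemma pair_betweenness_le_2:
  assumes "finite V" "0 \<le> lam"
  shows "pair_betweenness lam V E u k l \<le> 2 * lam ^ gdist V E k l"
proof -
  have "pair_betweenness lam V E u k l \<le> real 2 * lam ^ gdist V E k l"
    by (rule pair_betweenness_le[OF assms]) (simp add: card_uses_edge_le_2 shortest_paths_distinct)
  then show ?thesis by simp
qed

lemma power_gdist_le:
  fixes lam :: real
  assumes c: "connected_graph V E" and k: "k \<in> V" and l: "l \<in> V" "k \<noteq> l"
    and lam: "0 < lam" "lam < 1"
  shows "lam ^ gdist V E k l \<le> lam" and "\<not> E k l \<Longrightarrow> lam ^ gdist V E k l \<le> lam ^ 2"
proof -
  obtain p where p: "walk V E p" "hd p = k" "last p = l"
    using c k l unfolding connected_graph_def by blast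
  show "lam ^ gdist V E k l \<le> lam"
    using power_decreasing[OF gdist_ge_1[OF p l(2)], of lam] lam by simp
  show "lam ^ gdist V E k l \<le> lam ^ 2" if "\<not> E k l"
    using power_decreasing[OF gdist_ge_2[OF p l(2) that], of lam] lam by simp
qed

lemma pair_betweenness_le_star:
  assumes g: "simple_graph V E" and c: "connected_graph V E" and lam: "0 < lam" "lam < 1"
    and u: "u \<in> V" and k: "k \<in> V" and l: "l \<in> V" "k \<noteq> l"
  shows "pair_betweenness lam V E u k l \<le> pair_betweenness lam V (star_graph V u) u k l"
proof -
  have fin: "finite V" using g unfolding simple_graph_def by simp
  have lam0: "0 \<le> lam" using lam by simp
  consider "k = u \<or> l = u" | "k \<noteq> u" "l \<noteq> u" "E k l" | "k \<noteq> u" "l \<noteq> u" "\<not> E k l" by blast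
  then show ?thesis
  proof cases
    case 1
    then show ?thesis using pair_betweenness_le_centre[OF fin lam0 1, where E = E] power_gdist_le(1)[OF c k l lam]
        pair_betweenness_star_centre[OF fin k l 1, where lam = lam] by simp
  next
    case 2
    then show ?thesis using pair_betweenness_edge_avoiding[OF g lam0 2(3,1,2)]
        pair_betweenness_star_off_centre[OF fin u k l 2(1,2), where lam = lam] zero_le_power2[of lam]
      by linarith
  next
    case 3
    have "pair_betweenness lam V E u k l \<le> 2 * lam ^ gdist V E k l"
      by (rule pair_betweenness_le_2[OF fin lam0])
    also have "\<dots> \<le> 2 * lam ^ 2" using power_gdist_le(2)[OF c k l lam 3(3)] by simp
    finally show ?thesis using pair_betweenness_star_off_centre[OF fin u k l 3(1,2)] by simp
  qed
qed

lemma pair_betweenness_lt_star_nonadjacent: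
  assumes g: "simple_graph V E" and c: "connected_graph V E" and lam: "0 < lam" "lam < 1"
    and u: "u \<in> V" and l: "l \<in> V" "u \<noteq> l" "\<not> E u l"
  shows "pair_betweenness lam V E u u l < pair_betweenness lam V (star_graph V u) u u l"
proof -
  have fin: "finite V" using g unfolding simple_graph_def by simp
  have "pair_betweenness lam V E u u l \<le> lam ^ gdist V E u l"
    using pair_betweenness_le_centre[OF fin] lam by simp
  also have "\<dots> \<le> lam ^ 2" by (rule power_gdist_le(2)[OF c u l(1,2) lam l(3)])
  also have "\<dots> < lam" using lam by (simp add: power2_eq_square)
  finally show ?thesis using pair_betweenness_star_centre[OF fin u l(1,2), where lam = lam] by simp
qed

lemma pair_betweenness_lt_star_avoiding:
  assumes g: "simple_graph V E" and lam: "0 < lam" and u: "u \<in> V"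
    and e: "E a b" "a \<noteq> u" "b \<noteq> u"
  shows "pair_betweenness lam V E u a b < pair_betweenness lam V (star_graph V u) u a b"
proof -
  have fin: "finite V" and ab: "a \<in> V" "b \<in> V" "a \<noteq> b"
    using g e(1) unfolding simple_graph_def by auto
  show ?thesis using pair_betweenness_edge_avoiding[OF g _ e, of lam] lam
      pair_betweenness_star_off_centre[OF fin u ab e(2,3), where lam = lam] zero_less_power[OF lam, of 2]
    by linarith
qed

lemma exp_betweenness_centrality_lt_star:
  assumes g: "simple_graph V E" and c: "connected_graph V E" and lam: "0 < lam" "lam < 1"
    and u: "u \<in> V" and ne: "E \<noteq> star_graph V u"
  shows "exp_betweenness_centrality lam V E u
           < exp_betweenness_centrality lam V (star_graph V u) u"
proof -
  let ?P = "{(k, l). k \<in> V \<and> l \<in> V \<and> k \<noteq> l}"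
  have "finite ?P"
    using g unfolding simple_graph_def by (auto intro: finite_subset[of _ "V \<times> V"])
  moreover have "\<forall>(k, l)\<in>?P.
      pair_betweenness lam V E u k l \<le> pair_betweenness lam V (star_graph V u) u k l"
    using pair_betweenness_le_star[OF g c lam u] by blast
  moreover have "\<exists>(k, l)\<in>?P.
      pair_betweenness lam V E u k l < pair_betweenness lam V (star_graph V u) u k l"
  proof -
    obtain x y where xy: "E x y \<noteq> star_graph V u x y" using ne by blast
    consider (nonadjacent) l where "l \<in> V" "u \<noteq> l" "\<not> E u l"
      | (avoiding) "E x y" "x \<noteq> u" "y \<noteq> u"
      using xy g unfolding simple_graph_def star_graph_def by blast
    then show ?thesis
    proof cases
      case nonadjacent
      then show ?thesis using pair_betweenness_lt_star_nonadjacent[OF g c lam u] u by blast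
    next
      case avoiding
      moreover have "x \<in> V" "y \<in> V" "x \<noteq> y" using avoiding(1) g unfolding simple_graph_def by auto
      ultimately show ?thesis using pair_betweenness_lt_star_avoiding[OF g lam(1) u] by blast
    qed
  qed
  ultimately have "(\<Sum>(k, l)\<in>?P. pair_betweenness lam V E u k l)
      < (\<Sum>(k, l)\<in>?P. pair_betweenness lam V (star_graph V u) u k l)"
    by (intro sum_strict_mono_ex1) (auto simp: case_prod_beta)
  then show ?thesis by (simp add: exp_betweenness_centrality_eq_pair_sum)
qed

lemma cycle_edge_avoiding:
  assumes "is_cycle V E p"
  obtains a b where "E a b" "a \<noteq> u" "b \<noteq> u"
proof -
  from assms have w: "walk V E p" and d: "distinct p" and l3: "3 \<le> length p"
    and closing: "E (last p) (hd p)"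
    unfolding is_cycle_def by auto
  have e01: "E (p ! 0) (p ! 1)" and e12: "E (p ! 1) (p ! 2)"
    using w l3 unfolding walk_def by (auto simp: numeral_eq_Suc)
  have n: "p ! 0 \<noteq> p ! 1" "p ! 1 \<noteq> p ! 2" "p ! 0 \<noteq> p ! 2"
  proof -
    have i: "0 < length p" "1 < length p" "2 < length p" using l3 by auto
    show "p ! 0 \<noteq> p ! 1" "p ! 1 \<noteq> p ! 2" "p ! 0 \<noteq> p ! 2"
      using nth_eq_iff_index_eq[OF d i(1) i(2)] nth_eq_iff_index_eq[OF d i(2) i(3)]
        nth_eq_iff_index_eq[OF d i(1) i(3)] by simp_all
  qed
  consider "u \<noteq> p ! 0" "u \<noteq> p ! 1" | "u = p ! 0" | "u = p ! 1" by blast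
  then show ?thesis
  proof cases
    case 1
    then show ?thesis using e01 that by metis
  next
    case 2
    then show ?thesis using e12 n that by metis
  next
    case 3
    show ?thesis
    proof (cases "length p = 3")
      case True
      moreover have "p \<noteq> []" using l3 by auto
      ultimately have "last p = p ! 2" "hd p = p ! 0" by (auto simp: last_conv_nth hd_conv_nth)
      then show ?thesis using closing 3 n that by metis
    next
      case False
      then have "E (p ! 2) (p ! 3)" "p ! 3 \<noteq> p ! 1"
        using w d l3 unfolding walk_def by (auto simp: numeral_eq_Suc nth_eq_iff_index_eq)
      then show ?thesis using 3 n that by metis
    qed
  qed
qed

theorem lemma2:
  fixes lam :: real and n :: nat and V :: "'a set" and E :: "'a \<Rightarrow> 'a \<Rightarrow> bool"
  assumes "0 < lam" and "lam < 1" and "0 < n"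
    and "simple_graph V E" and "connected_graph V E" and "card V = n"
    and "\<forall>(V' :: 'a set) E'. simple_graph V' E' \<and> connected_graph V' E' \<and> card V' = n
           \<longrightarrow> max_exp_betweenness lam V' E' \<le> max_exp_betweenness lam V E"
  shows "is_tree V E"
proof (rule ccontr)
  assume "\<not> is_tree V E"
  then obtain p where cycle: "is_cycle V E p" using assms(5) unfolding is_tree_def by blast
  have fin: "finite V" using assms(4) unfolding simple_graph_def by simp
  have "V \<noteq> {}" using cycle unfolding is_cycle_def walk_def by auto
  then have "max_exp_betweenness lam V E \<in> exp_betweenness_centrality lam V E ` V"
    unfolding max_exp_betweenness_def using fin by (intro Max_in) auto
  then obtain u where u: "u \<in> V"
    and max: "max_exp_betweenness lam V E = exp_betweenness_centrality lam V E u"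
    by blast
  obtain a b where "E a b" "a \<noteq> u" "b \<noteq> u" using cycle_edge_avoiding[OF cycle] .
  then have "E \<noteq> star_graph V u" unfolding star_graph_def by metis
  then have "exp_betweenness_centrality lam V E u
      < exp_betweenness_centrality lam V (star_graph V u) u"
    using exp_betweenness_centrality_lt_star[OF assms(4,5,1,2) u] by blast
  also have "\<dots> \<le> max_exp_betweenness lam V (star_graph V u)"
    unfolding max_exp_betweenness_def using fin u by simp
  also have "\<dots> \<le> max_exp_betweenness lam V E"
    using assms(6,7) simple_graph_star[OF fin] connected_graph_star[OF u fin] by blast
  finally show False using max by simp
qed

end
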